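(* Let $G$ be a finite simple graph such that $\mathrm{mur}(G)$ is attained by a universal adjacency matrix $\alpha A_G+\beta I+\gamma J+\delta D_G$ of $G$ with $\delta=0$. Then for every induced subgraph $H$ of $G$, $\mathrm{mur}(H)\le\mathrm{mur}(G)$.
   Context: For a finite simple undirected graph $G$ on vertices $v_1,\dots,v_n$, let $A_G$ be its $(0,1)$-adjacency matrix, $D_G=\mathrm{diag}(d_1,\dots,d_n)$ with $d_i$ the degree of $v_i$, $I$ the $n\times n$ identity matrix and $J$ the $n\times n$ all-ones matrix. A universal adjacency matrix of $G$ is any matrix $\alpha A_G+\beta I+\gamma J+\delta D_G$ with real scalars $\alpha,\beta,\gamma,\delta$ and $\alpha\neq 0$. The minimum universal rank $\mathrm{mur}(G)$ is the minimum rank over all universal adjacency matrices of $G$. *)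

theory Defs
  imports "HOL-Analysis.Analysis"
begin

definition simple_graph :: "('n::finite \<Rightarrow> 'n \<Rightarrow> bool) \<Rightarrow> bool" where
  "simple_graph E \<longleftrightarrow> symp E \<and> irreflp E"

definition adj_mat :: "('n::finite \<Rightarrow> 'n \<Rightarrow> bool) \<Rightarrow> real^'n^'n" where
  "adj_mat E = (\<chi> i j. if E i j then 1 else 0)"

definition degree :: "('n::finite \<Rightarrow> 'n \<Rightarrow> bool) \<Rightarrow> 'n \<Rightarrow> nat" where
  "degree E i = card {j. E i j}"

definition deg_mat :: "('n::finite \<Rightarrow> 'n \<Rightarrow> bool) \<Rightarrow> real^'n^'n" where
  "deg_mat E = (\<chi> i j. if i = j then real (degree E i) else 0)"

definition ones_mat :: "real^'n^'n" where
  "ones_mat = (\<chi> i j. 1)"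

definition univ_adj ::
  "('n::finite \<Rightarrow> 'n \<Rightarrow> bool) \<Rightarrow> real \<Rightarrow> real \<Rightarrow> real \<Rightarrow> real \<Rightarrow> real^'n^'n" where
  "univ_adj E \<alpha> \<beta> \<gamma> \<delta> =
     \<alpha> *\<^sub>R adj_mat E + \<beta> *\<^sub>R mat 1 + \<gamma> *\<^sub>R ones_mat + \<delta> *\<^sub>R deg_mat E"

definition mur :: "('n::finite \<Rightarrow> 'n \<Rightarrow> bool) \<Rightarrow> nat" where
  "mur E = (LEAST r. \<exists>\<alpha> \<beta> \<gamma> \<delta>. \<alpha> \<noteq> 0 \<and> r = rank (univ_adj E \<alpha> \<beta> \<gamma> \<delta>))"

text \<open>The subgraph of E induced on the image of an injection f (vertices relabelled by 'm).\<close>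
definition induced :: "('n \<Rightarrow> 'n \<Rightarrow> bool) \<Rightarrow> ('m \<Rightarrow> 'n) \<Rightarrow> 'm \<Rightarrow> 'm \<Rightarrow> bool" where
  "induced E f = (\<lambda>x y. E (f x) (f y))"

end

theory Submission
  imports Defs
begin

text \<open>With \<open>\<delta> = 0\<close> the universal adjacency matrix of an induced subgraph is literally a
  principal submatrix of the one of \<open>G\<close> (no degrees, which would change, are involved), and
  a submatrix never has larger rank, being the product \<open>S A T\<^sup>T\<close> with 0/1 selection matrices.\<close>

definition selection_mat :: "('m::finite \<Rightarrow> 'n::finite) \<Rightarrow> real^'n^'m" where
  "selection_mat f = (\<chi> i j. if j = f i then 1 else 0)"

lemma selection_mat_mult_transpose:
  fixes A :: "real^'n::finite^'k::finite"
    and f :: "'m::finite \<Rightarrow> 'k" and g :: "'p::finite \<Rightarrow> 'n"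
  shows "selection_mat f ** A ** transpose (selection_mat g) = (\<chi> i j. A $ f i $ g j)"
proof -
  have rows: "selection_mat f ** A = (\<chi> i l. A $ f i $ l)"
    by (simp add: vec_eq_iff matrix_matrix_mult_def selection_mat_def
        if_distrib[of "\<lambda>x. x * _"] cong: if_cong)
  show ?thesis
    unfolding rows by (simp add: vec_eq_iff matrix_matrix_mult_def selection_mat_def transpose_def
        if_distrib[of "\<lambda>x. _ * x"] cong: if_cong)
qed

lemma rank_submatrix_le:
  fixes A :: "real^'n::finite^'k::finite"
    and f :: "'m::finite \<Rightarrow> 'k" and g :: "'p::finite \<Rightarrow> 'n"
  shows "rank (\<chi> i j. A $ f i $ g j) \<le> rank A"
proof -
  have "rank (selection_mat f ** A ** transpose (selection_mat g)) \<le> rank (selection_mat f ** A)"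
    by (rule rank_mul_le_left)
  also have "\<dots> \<le> rank A"
    by (rule rank_mul_le_right)
  finally show ?thesis
    by (simp add: selection_mat_mult_transpose)
qed

lemma univ_adj_induced:
  fixes E :: "'n::finite \<Rightarrow> 'n \<Rightarrow> bool" and f :: "'m::finite \<Rightarrow> 'n"
  assumes "inj f"
  shows "univ_adj (induced E f) \<alpha> \<beta> \<gamma> 0 = (\<chi> i j. univ_adj E \<alpha> \<beta> \<gamma> 0 $ f i $ f j)"
  using assms
  by (simp add: vec_eq_iff univ_adj_def adj_mat_def induced_def mat_def ones_mat_def inj_eq)

lemma mur_le_rank_univ_adj:
  fixes E :: "'n::finite \<Rightarrow> 'n \<Rightarrow> bool"
  assumes "\<alpha> \<noteq> 0"
  shows "mur E \<le> rank (univ_adj E \<alpha> \<beta> \<gamma> \<delta>)"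
  unfolding mur_def by (rule Least_le) (use assms in blast)

theorem theorem23:
  fixes E :: "'n::finite \<Rightarrow> 'n \<Rightarrow> bool"
    and f :: "'m::finite \<Rightarrow> 'n"
  assumes "simple_graph E"
    and "\<exists>\<alpha> \<beta> \<gamma>. \<alpha> \<noteq> 0 \<and> rank (univ_adj E \<alpha> \<beta> \<gamma> 0) = mur E"
    and "inj f"
  shows "mur (induced E f) \<le> mur E"
proof -
  obtain \<alpha> \<beta> \<gamma> where "\<alpha> \<noteq> 0" and attained: "rank (univ_adj E \<alpha> \<beta> \<gamma> 0) = mur E"
    using assms(2) by blast
  have "mur (induced E f) \<le> rank (univ_adj (induced E f) \<alpha> \<beta> \<gamma> 0)"
    using \<open>\<alpha> \<noteq> 0\<close> by (rule mur_le_rank_univ_adj)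
  also have "\<dots> \<le> rank (univ_adj E \<alpha> \<beta> \<gamma> 0)"
    unfolding univ_adj_induced[OF assms(3)] by (rule rank_submatrix_le)
  finally show ?thesis
    using attained by simp
qed

end
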